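(* Let $A_S$ be a parabolic-retractable Artin group with Coxeter matrix $(m_{s,t})_{s,t\in S}$, and let $a,b,c\in S$ be pairwise distinct. If $m_{a,b}$ is odd and $m_{a,c}$ is even, then $m_{b,c}$ is even.
   Context: A Coxeter matrix over a finite set $S$ is a matrix $M=(m_{s,t})_{s,t\in S}$ with entries in $\mathbb{N}\cup\{\infty\}$, $m_{s,s}=1$, and $m_{s,t}=m_{t,s}\ge 2$ for $s\neq t$. Write $\Pi(s,t,m)$ for the alternating word $sts\cdots$ of length $m$. The Artin group is $A_S=\langle S\mid \Pi(s,t,m_{s,t})=\Pi(t,s,m_{s,t})$ for $s\neq t$, $m_{s,t}\neq\infty\rangle$. For $X\subseteq S$, $A_X$ is the subgroup generated by $X$. A retraction of $G$ onto a subgroup $H$ is a homomorphism $\varphi:G\to H$ with $\varphi|_H=\mathrm{id}_H$. $A_S$ is parabolic-retractable if it admits a retraction onto $A_X$ for every $X\subseteq S$. "Odd" and "even" refer to finite integers ($\infty$ is neither). *)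

theory Defs
  imports "HOL-Algebra.Generated_Groups" "HOL-Library.Extended_Nat"
begin

definition coxeter_matrix :: "'s set \<Rightarrow> ('s \<Rightarrow> 's \<Rightarrow> enat) \<Rightarrow> bool" where
  "coxeter_matrix S M \<longleftrightarrow> finite S \<and> (\<forall>s\<in>S. M s s = 1) \<and>
     (\<forall>s\<in>S. \<forall>t\<in>S. s \<noteq> t \<longrightarrow> M s t = M t s \<and> M s t \<ge> 2)"

definition odd_entry :: "enat \<Rightarrow> bool" where
  "odd_entry m \<longleftrightarrow> (\<exists>k. m = enat k \<and> odd k)"
definition even_entry :: "enat \<Rightarrow> bool" where
  "even_entry m \<longleftrightarrow> (\<exists>k. m = enat k \<and> even k)"

text \<open>Words in the generators and their inverses: (s, True) = s, (s, False) = s^-1.\<close>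
type_synonym 's word = "('s \<times> bool) list"

definition words :: "'s set \<Rightarrow> 's word set" where
  "words S = lists (S \<times> UNIV)"

definition alt_word :: "'s \<Rightarrow> 's \<Rightarrow> nat \<Rightarrow> 's word" where
  "alt_word s t m = map (\<lambda>i. (if even i then s else t, True)) [0..<m]"

inductive artin_rel :: "'s set \<Rightarrow> ('s \<Rightarrow> 's \<Rightarrow> enat) \<Rightarrow> 's word \<Rightarrow> 's word \<Rightarrow> bool"
  for S M where
  refl: "w \<in> words S \<Longrightarrow> artin_rel S M w w"
| sym: "artin_rel S M u v \<Longrightarrow> artin_rel S M v u"
| trans: "artin_rel S M u v \<Longrightarrow> artin_rel S M v w \<Longrightarrow> artin_rel S M u w"
| free: "u \<in> words S \<Longrightarrow> v \<in> words S \<Longrightarrow> s \<in> S \<Longrightarrow>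
         artin_rel S M (u @ [(s, e), (s, \<not> e)] @ v) (u @ v)"
| braid: "u \<in> words S \<Longrightarrow> v \<in> words S \<Longrightarrow> s \<in> S \<Longrightarrow> t \<in> S \<Longrightarrow> s \<noteq> t \<Longrightarrow>
          M s t = enat k \<Longrightarrow>
          artin_rel S M (u @ alt_word s t k @ v) (u @ alt_word t s k @ v)"

definition artin_class :: "'s set \<Rightarrow> ('s \<Rightarrow> 's \<Rightarrow> enat) \<Rightarrow> 's word \<Rightarrow> 's word set" where
  "artin_class S M w = {v. artin_rel S M w v}"

definition artin_group :: "'s set \<Rightarrow> ('s \<Rightarrow> 's \<Rightarrow> enat) \<Rightarrow> 's word set monoid" where
  "artin_group S M =
     \<lparr> carrier = artin_class S M ` words S,
       mult = (\<lambda>A B. \<Union>a\<in>A. \<Union>b\<in>B. artin_class S M (a @ b)),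
       one = artin_class S M [] \<rparr>"

definition artin_gen :: "'s set \<Rightarrow> ('s \<Rightarrow> 's \<Rightarrow> enat) \<Rightarrow> 's \<Rightarrow> 's word set" where
  "artin_gen S M s = artin_class S M [(s, True)]"

definition parabolic :: "'s set \<Rightarrow> ('s \<Rightarrow> 's \<Rightarrow> enat) \<Rightarrow> 's set \<Rightarrow> 's word set set" where
  "parabolic S M X = generate (artin_group S M) (artin_gen S M ` X)"

definition is_retraction :: "('a, 'b) monoid_scheme \<Rightarrow> 'a set \<Rightarrow> ('a \<Rightarrow> 'a) \<Rightarrow> bool" where
  "is_retraction G H \<phi> \<longleftrightarrow> \<phi> \<in> hom G G \<and> \<phi> ` carrier G \<subseteq> H \<and> (\<forall>h\<in>H. \<phi> h = h)"

definition parabolic_retractable :: "'s set \<Rightarrow> ('s \<Rightarrow> 's \<Rightarrow> enat) \<Rightarrow> bool" where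
  "parabolic_retractable S M \<longleftrightarrow>
     (\<forall>X \<subseteq> S. \<exists>\<phi>. is_retraction (artin_group S M) (parabolic S M X) \<phi>)"

end

theory Submission
  imports Defs
begin

text \<open>Let A_S act on \<open>S \<Rightarrow> real\<close> by the reflections of a Tits-type form with
  B(e_s, e_t) = -cos(pi/m) for odd m = m_st, 0 for even m and -1 for m = \<infinity>. These reflections
  are involutions satisfying the braid relations, so the action factors through A_S. If phi is a
  retraction onto A_X and s is not in X, then the action y of phi(s) lies in the image of A_X and
  satisfies the braid relations of s with the reflections of X.

  If m_bc is odd, retract onto A_{a,c}. It preserves the line through e_a, on which a acts by -1
  and c by 1 (because m_ac is even). So y acts on that line by a sign, and the odd braid relations
  of y with a and with c force this sign to be both -1 and 1.

  If m_bc = \<infinity>, retract onto A_{b,c}. It acts on the plane spanned by e_b and e_b + e_c through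
  the infinite dihedral group. The odd braid relation with b forces y to act there as the
  reflection b, and then the braid relation of y with c, of finite length m_ac, would be a braid
  relation between the two generating reflections of the infinite dihedral group.\<close>

lemma alt_word_Suc: "alt_word s t (Suc n) = (s, True) # alt_word t s n"
  unfolding alt_word_def by (induct n) (auto simp: map_upt_Suc simp del: upt_Suc)

lemma alt_word_in_words: "s \<in> S \<Longrightarrow> t \<in> S \<Longrightarrow> alt_word s t n \<in> words S"
  by (auto simp: alt_word_def words_def)

lemma append_in_words: "u \<in> words S \<Longrightarrow> v \<in> words S \<Longrightarrow> u @ v \<in> words S"
  by (simp add: words_def)

lemma artin_rel_words: "artin_rel S M u v \<Longrightarrow> u \<in> words S \<and> v \<in> words S"
  by (induction rule: artin_rel.induct) (auto simp: words_def alt_word_def)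

lemma artin_rel_context:
  "artin_rel S M u v \<Longrightarrow> w \<in> words S \<Longrightarrow> w' \<in> words S \<Longrightarrow>
    artin_rel S M (w @ u @ w') (w @ v @ w')"
proof (induction rule: artin_rel.induct)
  case (refl u)
  then show ?case by (simp add: artin_rel.refl words_def)
next
  case (sym u v)
  then show ?case by (blast intro: artin_rel.sym)
next
  case (trans u v x)
  then show ?case by (blast intro: artin_rel.trans)
next
  case (free u v s e)
  then show ?case using artin_rel.free[of "w @ u" S "v @ w'" s M e] by (simp add: words_def)
next
  case (braid u v s t k)
  then show ?case using artin_rel.braid[of "w @ u" S "v @ w'" s t M k] by (simp add: words_def)
qed

lemma artin_rel_append:
  assumes u: "artin_rel S M u u'" and v: "artin_rel S M v v'"
  shows "artin_rel S M (u @ v) (u' @ v')"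
proof -
  have "artin_rel S M ([] @ u @ v) ([] @ u' @ v)"
    using artin_rel_context[OF u, of "[]" v] artin_rel_words[OF v] by (simp add: words_def)
  moreover have "artin_rel S M (u' @ v @ []) (u' @ v' @ [])"
    using artin_rel_context[OF v, of u' "[]"] artin_rel_words[OF u] by (simp add: words_def)
  ultimately show ?thesis by (auto intro: artin_rel.trans)
qed

lemma artin_class_eq:
  assumes r: "artin_rel S M u v"
  shows "artin_class S M u = artin_class S M v"
proof -
  have "artin_rel S M u w \<longleftrightarrow> artin_rel S M v w" for w
    using artin_rel.trans[OF artin_rel.sym[OF r], of w] artin_rel.trans[OF r, of w] by blast
  then show ?thesis unfolding artin_class_def by blast
qed

lemma mem_artin_class: "u \<in> words S \<Longrightarrow> u \<in> artin_class S M u"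
  unfolding artin_class_def by (simp add: artin_rel.refl)

lemma artin_class_mult:
  assumes "u \<in> words S" and "v \<in> words S"
  shows "artin_class S M u \<otimes>\<^bsub>artin_group S M\<^esub> artin_class S M v = artin_class S M (u @ v)"
proof -
  have "artin_class S M (u' @ v') = artin_class S M (u @ v)"
    if "u' \<in> artin_class S M u" and "v' \<in> artin_class S M v" for u' v'
    using that artin_class_eq[OF artin_rel_append, of S M u u' v v'] by (simp add: artin_class_def)
  moreover have "u \<in> artin_class S M u" "v \<in> artin_class S M v"
    using assms by (simp_all add: mem_artin_class)
  ultimately have "(\<Union>u'\<in>artin_class S M u. \<Union>v'\<in>artin_class S M v. artin_class S M (u' @ v')) =
      artin_class S M (u @ v)"
    by blast
  then show ?thesis by (simp add: artin_group_def)
qed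

lemma carrier_artin_group: "carrier (artin_group S M) = artin_class S M ` words S"
  by (simp add: artin_group_def)

lemma one_artin_group: "\<one>\<^bsub>artin_group S M\<^esub> = artin_class S M []"
  by (simp add: artin_group_def)

lemma artin_gen_in_carrier: "s \<in> S \<Longrightarrow> artin_gen S M s \<in> carrier (artin_group S M)"
  by (simp add: carrier_artin_group artin_gen_def words_def)

lemma monoid_artin_group: "monoid (artin_group S M)"
proof (rule monoidI)
  fix x y z
  assume "x \<in> carrier (artin_group S M)" "y \<in> carrier (artin_group S M)"
    "z \<in> carrier (artin_group S M)"
  then show "x \<otimes>\<^bsub>artin_group S M\<^esub> y \<otimes>\<^bsub>artin_group S M\<^esub> z =
      x \<otimes>\<^bsub>artin_group S M\<^esub> (y \<otimes>\<^bsub>artin_group S M\<^esub> z)"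
    by (auto simp: carrier_artin_group artin_class_mult append_in_words)
next
  have nil: "[] \<in> words S" by (simp add: words_def)
  fix x assume "x \<in> carrier (artin_group S M)"
  then obtain u where "u \<in> words S" "x = artin_class S M u"
    by (auto simp: carrier_artin_group)
  then show "\<one>\<^bsub>artin_group S M\<^esub> \<otimes>\<^bsub>artin_group S M\<^esub> x = x"
    and "x \<otimes>\<^bsub>artin_group S M\<^esub> \<one>\<^bsub>artin_group S M\<^esub> = x"
    using artin_class_mult[OF nil, of u M] artin_class_mult[OF _ nil, of u M]
    by (simp_all add: one_artin_group)
qed (auto simp: carrier_artin_group one_artin_group artin_class_mult append_in_words,
     simp add: words_def)

lemma inv_artin_gen:
  assumes "s \<in> S"
  shows "inv\<^bsub>artin_group S M\<^esub> (artin_gen S M s) = artin_class S M [(s, False)]"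
proof -
  interpret monoid "artin_group S M" by (rule monoid_artin_group)
  have words: "[(s, True)] \<in> words S" "[(s, False)] \<in> words S"
    using assms by (auto simp: words_def)
  have cancel: "artin_class S M [(s, e), (s, \<not> e)] = \<one>\<^bsub>artin_group S M\<^esub>" for e
    using artin_class_eq[OF artin_rel.free[of "[]" S "[]" s M e]] assms
    by (simp add: words_def one_artin_group)
  have carrier: "artin_gen S M s \<in> carrier (artin_group S M)"
    "artin_class S M [(s, False)] \<in> carrier (artin_group S M)"
    using words by (auto simp: carrier_artin_group artin_gen_def)
  show ?thesis
  proof (rule inv_unique'[OF carrier, symmetric])
    show "artin_gen S M s \<otimes>\<^bsub>artin_group S M\<^esub> artin_class S M [(s, False)] = \<one>\<^bsub>artin_group S M\<^esub>"
      using artin_class_mult[OF words, of M] cancel[of True] by (simp add: artin_gen_def)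
    show "artin_class S M [(s, False)] \<otimes>\<^bsub>artin_group S M\<^esub> artin_gen S M s = \<one>\<^bsub>artin_group S M\<^esub>"
      using artin_class_mult[OF words(2,1), of M] cancel[of False] by (simp add: artin_gen_def)
  qed
qed

fun alt_comp :: "('a \<Rightarrow> 'a) \<Rightarrow> ('a \<Rightarrow> 'a) \<Rightarrow> nat \<Rightarrow> 'a \<Rightarrow> 'a" where
  "alt_comp f g 0 = id"
| "alt_comp f g (Suc n) = f \<circ> alt_comp g f n"

lemma alt_comp_Suc_Suc: "alt_comp f g (Suc (Suc n)) = f \<circ> g \<circ> alt_comp f g n"
  by (simp add: o_assoc)

lemma alt_comp_even: "alt_comp f g (2 * j) = (f \<circ> g) ^^ j"
  by (induction j) (simp_all only: mult_Suc_right add_2_eq_Suc alt_comp_Suc_Suc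
      funpow.simps alt_comp.simps(1) mult_0_right)

lemma alt_comp_odd: "alt_comp f g (2 * j + 1) = (f \<circ> g) ^^ j \<circ> f"
proof (induction j)
  case (Suc j)
  have "2 * Suc j + 1 = Suc (Suc (2 * j + 1))" by simp
  then show ?case by (simp only: alt_comp_Suc_Suc Suc.IH funpow.simps o_assoc)
qed simp

lemma alt_comp_semiconj:
  assumes "f \<circ> h = h \<circ> F" and "g \<circ> h = h \<circ> G"
  shows "alt_comp f g n \<circ> h = h \<circ> alt_comp F G n"
  using assms
proof (induction n arbitrary: f g F G)
  case (Suc n)
  then show ?case by (simp add: o_assoc) (metis o_assoc)
qed simp

lemma braid_restrict:
  assumes "inj h" and "f \<circ> h = h \<circ> F" and "g \<circ> h = h \<circ> G"
    and "alt_comp f g n = alt_comp g f n"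
  shows "alt_comp F G n = alt_comp G F n"
proof -
  have "h \<circ> alt_comp F G n = h \<circ> alt_comp G F n"
    using alt_comp_semiconj[of f h F g G n] alt_comp_semiconj[of g h G f F n] assms(2-4) by simp
  then show ?thesis using assms(1) by (simp add: fun_eq_iff inj_eq)
qed

lemma braid_quotient:
  assumes "surj h" and "f \<circ> h = h \<circ> F" and "g \<circ> h = h \<circ> G"
    and "alt_comp F G n = alt_comp G F n"
  shows "alt_comp f g n = alt_comp g f n"
proof -
  have "alt_comp f g n \<circ> h = alt_comp g f n \<circ> h"
    using alt_comp_semiconj[of f h F g G n] alt_comp_semiconj[of g h G f F n] assms(2-4) by simp
  then show ?thesis using assms(1) by (metis surj_fun_eq)
qed

lemma funpow_comp_cancel:
  assumes "f \<circ> f = id" and "g \<circ> g = id"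
  shows "(g \<circ> f) ^^ n \<circ> (f \<circ> g) ^^ n = id"
proof (induction n)
  case (Suc n)
  have ff: "f (f x) = x" and gg: "g (g x) = x" for x
    using assms by (metis comp_apply id_apply)+
  have "(g \<circ> f) ^^ Suc n \<circ> (f \<circ> g) ^^ Suc n = (g \<circ> f) ^^ n \<circ> g \<circ> (f \<circ> f) \<circ> g \<circ> (f \<circ> g) ^^ n"
    by (simp only: funpow_Suc_right[of n "g \<circ> f"] funpow.simps(2)[of n "f \<circ> g"] o_assoc)
  also have "\<dots> = (g \<circ> f) ^^ n \<circ> (f \<circ> g) ^^ n" by (simp add: fun_eq_iff ff gg)
  also have "\<dots> = id" by (rule Suc.IH)
  finally show ?case .
qed simp

lemma braid_of_order:
  assumes "f \<circ> f = id" and "g \<circ> g = id" and "(f \<circ> g) ^^ m = id"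
  shows "alt_comp f g m = alt_comp g f m"
proof (cases "even m")
  case True
  then obtain j where m: "m = 2 * j" by blast
  have "(g \<circ> f) ^^ j = (g \<circ> f) ^^ j \<circ> (f \<circ> g) ^^ (j + j)"
    using assms(3) m by (simp add: mult_2)
  also have "\<dots> = (f \<circ> g) ^^ j"
    using funpow_comp_cancel[OF assms(1,2), of j] by (simp add: funpow_add o_assoc)
  finally show ?thesis by (simp add: m alt_comp_even)
next
  case False
  then obtain j where m: "m = 2 * j + 1" using oddE by blast
  have "(g \<circ> f) ^^ j \<circ> g = (g \<circ> f) ^^ j \<circ> g \<circ> (f \<circ> f)"
    using assms(1) by simp
  also have "\<dots> = (g \<circ> f) ^^ Suc j \<circ> f"
    by (simp only: funpow_Suc_right o_assoc)
  also have "\<dots> = (g \<circ> f) ^^ Suc j \<circ> (f \<circ> g) ^^ (Suc j + j) \<circ> f"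
  proof -
    have "Suc j + j = m" by (simp add: m)
    then show ?thesis using assms(3) by simp
  qed
  also have "\<dots> = (f \<circ> g) ^^ j \<circ> f"
    using funpow_comp_cancel[OF assms(1,2), of "Suc j"] by (simp add: funpow_add o_assoc)
  finally show ?thesis unfolding m alt_comp_odd by simp
qed

lemma odd_braid_with_id:
  assumes "inj g" and "odd n" and "alt_comp g id n = alt_comp id g n"
  shows "g = id"
proof -
  obtain j where n: "n = 2 * j + 1" using assms(2) oddE by blast
  have "g ^^ j \<circ> g = g ^^ j"
    using assms(3) unfolding n alt_comp_odd by simp
  then show ?thesis
    using inj_fn[OF assms(1), of j] by (simp add: fun_eq_iff inj_eq)
qed

fun word_action :: "('s \<Rightarrow> 'a \<Rightarrow> 'a) \<Rightarrow> 's word \<Rightarrow> 'a \<Rightarrow> 'a" where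
  "word_action f [] = id"
| "word_action f (x # w) = f (fst x) \<circ> word_action f w"

lemma word_action_append: "word_action f (u @ v) = word_action f u \<circ> word_action f v"
  by (induction u) auto

lemma word_action_alt_word: "word_action f (alt_word s t n) = alt_comp (f s) (f t) n"
  by (induction n arbitrary: s t) (simp_all add: alt_word_Suc alt_word_def[of _ _ 0])

definition coxeter_rep :: "'s set \<Rightarrow> ('s \<Rightarrow> 's \<Rightarrow> enat) \<Rightarrow> ('s \<Rightarrow> 'a \<Rightarrow> 'a) \<Rightarrow> bool" where
  "coxeter_rep S M f \<longleftrightarrow> (\<forall>s\<in>S. f s \<circ> f s = id) \<and>
     (\<forall>s\<in>S. \<forall>t\<in>S. \<forall>k. s \<noteq> t \<longrightarrow> M s t = enat k \<longrightarrow>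
        alt_comp (f s) (f t) k = alt_comp (f t) (f s) k)"

lemma word_action_artin_rel:
  assumes "coxeter_rep S M f"
  shows "artin_rel S M u v \<Longrightarrow> word_action f u = word_action f v"
proof (induction rule: artin_rel.induct)
  case (free u v s e)
  then show ?case using assms by (simp add: coxeter_rep_def word_action_append o_assoc)
next
  case (braid u v s t k)
  then have "alt_comp (f s) (f t) k = alt_comp (f t) (f s) k"
    using assms unfolding coxeter_rep_def by blast
  then show ?case by (simp add: word_action_append word_action_alt_word)
qed auto

definition class_action :: "('s \<Rightarrow> 'a \<Rightarrow> 'a) \<Rightarrow> 's word set \<Rightarrow> 'a \<Rightarrow> 'a" where
  "class_action f A = word_action f (SOME w. w \<in> A)"

lemma class_action_artin_class:
  assumes "coxeter_rep S M f" and "u \<in> words S"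
  shows "class_action f (artin_class S M u) = word_action f u"
proof -
  have "(SOME w. w \<in> artin_class S M u) \<in> artin_class S M u"
    using mem_artin_class[OF assms(2)] by (rule someI)
  then show ?thesis
    unfolding class_action_def artin_class_def using word_action_artin_rel[OF assms(1)] by simp
qed

lemma class_action_mult:
  assumes "coxeter_rep S M f"
    and "A \<in> carrier (artin_group S M)" and "B \<in> carrier (artin_group S M)"
  shows "class_action f (A \<otimes>\<^bsub>artin_group S M\<^esub> B) = class_action f A \<circ> class_action f B"
  using assms(2,3)
  by (auto simp: carrier_artin_group artin_class_mult class_action_artin_class[OF assms(1)]
      append_in_words word_action_append)

lemma class_action_artin_gen:
  "coxeter_rep S M f \<Longrightarrow> s \<in> S \<Longrightarrow> class_action f (artin_gen S M s) = f s"
  unfolding artin_gen_def by (simp add: class_action_artin_class words_def)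

lemma class_action_parabolic:
  assumes rep: "coxeter_rep S M f" and "X \<subseteq> S"
    and "P id" and "\<And>x. x \<in> X \<Longrightarrow> P (f x)" and "\<And>g h. P g \<Longrightarrow> P h \<Longrightarrow> P (g \<circ> h)"
    and "A \<in> parabolic S M X"
  shows "P (class_action f A)"
proof -
  have "A \<in> carrier (artin_group S M) \<and> P (class_action f A)"
    using assms(6) unfolding parabolic_def
  proof (induction rule: generate.induct)
    case one
    have "[] \<in> words S" by (simp add: words_def)
    then show ?case
      using assms(3) by (simp add: one_artin_group carrier_artin_group class_action_artin_class[OF rep] id_def)
  next
    case (incl h)
    then show ?case
      using assms(2,4) by (auto simp: artin_gen_in_carrier class_action_artin_gen[OF rep])
  next
    case (inv h)
    then obtain x where x: "x \<in> X" "h = artin_gen S M x" by auto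
    then have "[(x, False)] \<in> words S" using assms(2) by (auto simp: words_def)
    then show ?case
      using x assms(2,4) by (auto simp: inv_artin_gen carrier_artin_group class_action_artin_class[OF rep])
  next
    case (eng h h')
    then have "h \<otimes>\<^bsub>artin_group S M\<^esub> h' \<in> carrier (artin_group S M)"
      by (simp add: monoid.m_closed[OF monoid_artin_group])
    moreover have "class_action f (h \<otimes>\<^bsub>artin_group S M\<^esub> h') = class_action f h \<circ> class_action f h'"
      using eng.IH class_action_mult[OF rep] by blast
    ultimately show ?case using eng.IH assms(5) by metis
  qed
  then show ?thesis ..
qed

lemma class_action_hom_alt_word:
  assumes rep: "coxeter_rep S M f" and hom: "\<phi> \<in> hom (artin_group S M) (artin_group S M)"
    and "s \<in> S" and "t \<in> S"
  shows "class_action f (\<phi> (artin_class S M (alt_word s t (Suc n)))) =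
    alt_comp (class_action f (\<phi> (artin_gen S M s))) (class_action f (\<phi> (artin_gen S M t))) (Suc n)"
  using assms(3,4)
proof (induction n arbitrary: s t)
  case 0
  then show ?case by (simp add: alt_word_def artin_gen_def)
next
  case (Suc n)
  let ?G = "artin_group S M"
  have words: "[(s, True)] \<in> words S" "alt_word t s (Suc n) \<in> words S"
    using Suc.prems alt_word_in_words[of t S s] by (auto simp: words_def)
  then have carrier: "artin_gen S M s \<in> carrier ?G" "artin_class S M (alt_word t s (Suc n)) \<in> carrier ?G"
    by (auto simp: carrier_artin_group artin_gen_def)
  have "artin_class S M (alt_word s t (Suc (Suc n))) =
      artin_gen S M s \<otimes>\<^bsub>?G\<^esub> artin_class S M (alt_word t s (Suc n))"
    using artin_class_mult[OF words] by (simp add: alt_word_Suc[of s t "Suc n"] artin_gen_def)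
  then have "\<phi> (artin_class S M (alt_word s t (Suc (Suc n)))) =
      \<phi> (artin_gen S M s) \<otimes>\<^bsub>?G\<^esub> \<phi> (artin_class S M (alt_word t s (Suc n)))"
    using hom carrier by (simp add: hom_mult)
  then show ?case
    using Suc.IH[of t s] Suc.prems carrier hom_in_carrier[OF hom]
    by (simp add: class_action_mult[OF rep])
qed

lemma class_action_hom_braid:
  assumes rep: "coxeter_rep S M f" and hom: "\<phi> \<in> hom (artin_group S M) (artin_group S M)"
    and "s \<in> S" and "t \<in> S" and "s \<noteq> t" and "M s t = enat k"
  shows "alt_comp (class_action f (\<phi> (artin_gen S M s))) (class_action f (\<phi> (artin_gen S M t))) k =
    alt_comp (class_action f (\<phi> (artin_gen S M t))) (class_action f (\<phi> (artin_gen S M s))) k"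
proof (cases k)
  case (Suc n)
  have "artin_rel S M ([] @ alt_word s t k @ []) ([] @ alt_word t s k @ [])"
    using assms(3-6) by (intro artin_rel.braid) (auto simp: words_def)
  then have "artin_class S M (alt_word s t k) = artin_class S M (alt_word t s k)"
    using artin_class_eq by simp
  then show ?thesis
    using class_action_hom_alt_word[OF rep hom] assms(3,4) Suc by metis
qed simp

lemma retraction_braid:
  assumes rep: "coxeter_rep S M f" and ret: "is_retraction (artin_group S M) (parabolic S M X) \<phi>"
    and "X \<subseteq> S" and "x \<in> X" and "s \<in> S" and "x \<noteq> s" and "M x s = enat k"
  shows "alt_comp (f x) (class_action f (\<phi> (artin_gen S M s))) k =
    alt_comp (class_action f (\<phi> (artin_gen S M s))) (f x) k"
proof -
  have "artin_gen S M x \<in> parabolic S M X"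
    using assms(4) unfolding parabolic_def by (auto intro: generate.incl)
  then have "\<phi> (artin_gen S M x) = artin_gen S M x"
    using ret by (simp add: is_retraction_def)
  moreover have "x \<in> S" using assms(3,4) by blast
  ultimately show ?thesis
    using class_action_hom_braid[OF rep _ _ assms(5,6,7), of \<phi>] ret
    by (simp add: is_retraction_def class_action_artin_gen[OF rep])
qed

lemma retraction_semiconj:
  assumes rep: "coxeter_rep S M f" and ret: "is_retraction (artin_group S M) (parabolic S M X) \<phi>"
    and "X \<subseteq> S" and "s \<in> S"
    and "id \<in> T" and "\<And>F G. F \<in> T \<Longrightarrow> G \<in> T \<Longrightarrow> F \<circ> G \<in> T"
    and "\<And>x. x \<in> X \<Longrightarrow> \<exists>F\<in>T. f x \<circ> h = h \<circ> F"
  shows "\<exists>F\<in>T. class_action f (\<phi> (artin_gen S M s)) \<circ> h = h \<circ> F"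
proof (rule class_action_parabolic[OF rep assms(3)])
  show "\<exists>F\<in>T. id \<circ> h = h \<circ> F" using assms(5) by (metis id_comp comp_id)
  show "\<exists>F\<in>T. g \<circ> g' \<circ> h = h \<circ> F"
    if "\<exists>F\<in>T. g \<circ> h = h \<circ> F" and "\<exists>F\<in>T. g' \<circ> h = h \<circ> F" for g g'
    using that assms(6) by (metis comp_assoc)
  show "\<phi> (artin_gen S M s) \<in> parabolic S M X"
    using ret artin_gen_in_carrier[OF assms(4)] by (auto simp: is_retraction_def)
qed (rule assms(7))

lemma coxeter_matrix_sym: "coxeter_matrix S M \<Longrightarrow> s \<in> S \<Longrightarrow> t \<in> S \<Longrightarrow> M s t = M t s"
  unfolding coxeter_matrix_def by (cases "s = t") auto

lemma coxeter_matrix_enat_ge_2: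
  "coxeter_matrix S M \<Longrightarrow> s \<in> S \<Longrightarrow> t \<in> S \<Longrightarrow> s \<noteq> t \<Longrightarrow> M s t = enat k \<Longrightarrow> k \<ge> 2"
  unfolding coxeter_matrix_def by (metis enat_ord_simps(1) numeral_eq_enat)

text \<open>Odd entries get the classical value \<open>-cos (pi / m)\<close> of the Tits form, but even entries get 0
  instead of \<open>-cos (pi / m)\<close>: the two reflections then commute, which still implies the braid
  relation of even length, and a parabolic subgroup all of whose edges are even acts diagonally on
  the corresponding basis vectors.\<close>
definition tits_coeff :: "enat \<Rightarrow> real" where
  "tits_coeff m = (case m of enat k \<Rightarrow> if odd k then - cos (pi / real k) else 0 | \<infinity> \<Rightarrow> -1)"

definition tits_entry :: "('s \<Rightarrow> 's \<Rightarrow> enat) \<Rightarrow> 's \<Rightarrow> 's \<Rightarrow> real" where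
  "tits_entry M s t = (if s = t then 1 else tits_coeff (M s t))"

definition unit_vec :: "'s \<Rightarrow> 's \<Rightarrow> real" where
  "unit_vec s = (\<lambda>x. if x = s then 1 else 0)"

definition tits_form :: "'s set \<Rightarrow> ('s \<Rightarrow> 's \<Rightarrow> enat) \<Rightarrow> 's \<Rightarrow> ('s \<Rightarrow> real) \<Rightarrow> real" where
  "tits_form S M s v = (\<Sum>t\<in>S. tits_entry M s t * v t)"

definition reflection :: "'s set \<Rightarrow> ('s \<Rightarrow> 's \<Rightarrow> enat) \<Rightarrow> 's \<Rightarrow> ('s \<Rightarrow> real) \<Rightarrow> 's \<Rightarrow> real" where
  "reflection S M s v = (\<lambda>x. v x - 2 * tits_form S M s v * unit_vec s x)"

lemma tits_entry_sym:
  "coxeter_matrix S M \<Longrightarrow> s \<in> S \<Longrightarrow> t \<in> S \<Longrightarrow> tits_entry M s t = tits_entry M t s"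
  unfolding coxeter_matrix_def tits_entry_def by auto

lemma tits_form_lincomb:
  "tits_form S M s (\<lambda>x. a * u x + b * v x) = a * tits_form S M s u + b * tits_form S M s v"
  unfolding tits_form_def by (simp add: algebra_simps sum.distrib sum_distrib_left)

lemma tits_form_scale: "tits_form S M s (\<lambda>x. a * v x) = a * tits_form S M s v"
  unfolding tits_form_def by (simp add: sum_distrib_left algebra_simps)

lemma tits_form_unit_vec:
  "finite S \<Longrightarrow> t \<in> S \<Longrightarrow> tits_form S M s (unit_vec t) = tits_entry M s t"
  unfolding tits_form_def unit_vec_def by (simp add: if_distrib cong: if_cong)

lemma tits_form_add_unit_vec:
  assumes "finite S" and "t \<in> S"
  shows "tits_form S M s (\<lambda>x. v x + c * unit_vec t x) = tits_form S M s v + c * tits_entry M s t"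
proof -
  have eq: "(\<lambda>x. v x + c * unit_vec t x) = (\<lambda>x. 1 * v x + c * unit_vec t x)" by simp
  show ?thesis unfolding eq tits_form_lincomb tits_form_unit_vec[OF assms] by simp
qed

lemma tits_form_reflection:
  assumes "finite S" and "t \<in> S"
  shows "tits_form S M s (reflection S M t v) = tits_form S M s v - 2 * tits_form S M t v * tits_entry M s t"
proof -
  have "reflection S M t v = (\<lambda>x. v x + (- 2 * tits_form S M t v) * unit_vec t x)"
    unfolding reflection_def by simp
  then show ?thesis by (simp only: tits_form_add_unit_vec[OF assms])
qed

lemma reflection_involution:
  assumes "finite S" and "s \<in> S"
  shows "reflection S M s \<circ> reflection S M s = id"
proof
  fix v
  have "tits_form S M s (reflection S M s v) = - tits_form S M s v"
    using tits_form_reflection[OF assms, of M s v] by (simp add: tits_entry_def)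
  then show "(reflection S M s \<circ> reflection S M s) v = id v"
    by (simp add: reflection_def[of S M s "reflection S M s v"]) (simp add: reflection_def)
qed

lemma reflections_commute:
  assumes "finite S" and "s \<in> S" and "t \<in> S" and "tits_entry M s t = 0" and "tits_entry M t s = 0"
  shows "reflection S M s \<circ> reflection S M t = reflection S M t \<circ> reflection S M s"
proof
  fix v
  have "tits_form S M s (reflection S M t v) = tits_form S M s v"
    and "tits_form S M t (reflection S M s v) = tits_form S M t v"
    using tits_form_reflection[OF assms(1,3), of M s v] tits_form_reflection[OF assms(1,2), of M t v]
      assms(4,5) by simp_all
  then show "(reflection S M s \<circ> reflection S M t) v = (reflection S M t \<circ> reflection S M s) v"
    by (simp add: reflection_def[of S M s "reflection S M t v"] reflection_def[of S M t "reflection S M s v"])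
      (simp add: reflection_def fun_eq_iff algebra_simps)
qed

text \<open>The effect of \<open>reflection s \<circ> reflection t\<close> on the pair \<open>(tits_form s v, tits_form t v)\<close>
  when both off-diagonal entries are \<open>-c\<close>; for \<open>c = cos (pi / m)\<close> it is conjugate to the
  rotation by \<open>2 * pi / m\<close>.\<close>
definition rot_step :: "real \<Rightarrow> real \<times> real \<Rightarrow> real \<times> real" where
  "rot_step c = (\<lambda>(x, y). (- x - 2 * c * y, - y + 2 * c * (x + 2 * c * y)))"

lemma sin_Suc_mult:
  "sin ((real n + 1) * \<phi>) = 2 * cos \<phi> * sin (real n * \<phi>) - sin ((real n - 1) * \<phi>)"
proof -
  have "(real n + 1) * \<phi> = real n * \<phi> + \<phi>" and "(real n - 1) * \<phi> = real n * \<phi> - \<phi>"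
    by (simp_all add: algebra_simps)
  then show ?thesis by (simp add: sin_add sin_diff)
qed

lemma rot_step_funpow:
  assumes "cos \<phi> = 2 * c\<^sup>2 - 1"
  shows "sin \<phi> * fst ((rot_step c ^^ n) p) =
      sin (real n * \<phi>) * fst (rot_step c p) - sin ((real n - 1) * \<phi>) * fst p
    \<and> sin \<phi> * snd ((rot_step c ^^ n) p) =
      sin (real n * \<phi>) * snd (rot_step c p) - sin ((real n - 1) * \<phi>) * snd p"
proof (induction n)
  case (Suc n)
  obtain x y where p: "p = (x, y)" by (cases p)
  obtain X Y where q: "(rot_step c ^^ n) p = (X, Y)" by (cases "(rot_step c ^^ n) p")
  have rec: "sin ((real n + 1) * \<phi>) = 2 * cos \<phi> * sin (real n * \<phi>) - sin ((real n - 1) * \<phi>)"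
    by (rule sin_Suc_mult)
  have prev: "sin \<phi> * X = sin (real n * \<phi>) * (- x - 2 * c * y) - sin ((real n - 1) * \<phi>) * x"
    "sin \<phi> * Y = sin (real n * \<phi>) * (- y + 2 * c * (x + 2 * c * y)) - sin ((real n - 1) * \<phi>) * y"
    using Suc.IH p q by (simp_all add: rot_step_def)
  have "sin \<phi> * (- X - 2 * c * Y) =
      sin ((real n + 1) * \<phi>) * (- x - 2 * c * y) - sin (real n * \<phi>) * x"
    and "sin \<phi> * (- Y + 2 * c * (X + 2 * c * Y)) =
      sin ((real n + 1) * \<phi>) * (- y + 2 * c * (x + 2 * c * y)) - sin (real n * \<phi>) * y"
    using prev rec assms by algebra+
  moreover have "(rot_step c ^^ Suc n) p = (- X - 2 * c * Y, - Y + 2 * c * (X + 2 * c * Y))"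
    using q by (simp add: rot_step_def)
  ultimately show ?case using p by (simp add: rot_step_def add.commute)
qed simp

lemma rot_step_order:
  assumes "m \<ge> 3"
  shows "rot_step (cos (pi / m)) ^^ m = id"
proof
  fix p
  define \<phi> where "\<phi> = 2 * (pi / m)"
  have cos: "cos \<phi> = 2 * (cos (pi / m))\<^sup>2 - 1"
    unfolding \<phi>_def by (rule cos_double_cos)
  have "0 < \<phi>" and "\<phi> < pi"
    using assms by (simp_all add: \<phi>_def field_simps)
  then have "sin \<phi> > 0" by (rule sin_gt_zero)
  have "real m * \<phi> = 2 * pi" using assms by (simp add: \<phi>_def)
  then have "sin (real m * \<phi>) = 0" and "sin ((real m - 1) * \<phi>) = - sin \<phi>"
    by (simp_all add: algebra_simps sin_diff)
  then show "(rot_step (cos (pi / m)) ^^ m) p = id p"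
    using rot_step_funpow[OF cos, of m p] \<open>sin \<phi> > 0\<close> by (simp add: prod_eq_iff)
qed

lemma reflection_pair_span:
  "\<exists>p q. ((reflection S M s \<circ> reflection S M t) ^^ n) v = (\<lambda>x. v x + p * unit_vec s x + q * unit_vec t x)"
proof (induction n)
  case 0
  show ?case by (rule exI[of _ 0], rule exI[of _ 0]) simp
next
  case (Suc n)
  have step: "\<exists>p' q'. reflection S M u w = (\<lambda>x. v x + p' * unit_vec s x + q' * unit_vec t x)"
    if "w = (\<lambda>x. v x + p * unit_vec s x + q * unit_vec t x)" and "u = s \<or> u = t" for u w p q
    using that(2)
  proof
    assume "u = s"
    then show ?thesis using that(1)
      by (intro exI[of _ "p - 2 * tits_form S M u w"] exI[of _ q])
        (auto simp: reflection_def fun_eq_iff algebra_simps)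
  next
    assume "u = t"
    then show ?thesis using that(1)
      by (intro exI[of _ p] exI[of _ "q - 2 * tits_form S M u w"])
        (auto simp: reflection_def fun_eq_iff algebra_simps)
  qed
  from Suc.IH step[where u = t] step[where u = s] show ?case by fastforce
qed

lemma tits_form_pair_funpow:
  assumes "finite S" and "s \<in> S" and "t \<in> S"
    and "tits_entry M s t = - c" and "tits_entry M t s = - c"
  shows "(tits_form S M s (((reflection S M s \<circ> reflection S M t) ^^ n) v),
          tits_form S M t (((reflection S M s \<circ> reflection S M t) ^^ n) v)) =
         (rot_step c ^^ n) (tits_form S M s v, tits_form S M t v)"
proof (induction n)
  case (Suc n)
  let ?w = "((reflection S M s \<circ> reflection S M t) ^^ n) v"
  have "tits_form S M s (reflection S M s (reflection S M t ?w)) =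
      - tits_form S M s ?w - 2 * c * tits_form S M t ?w"
    and "tits_form S M t (reflection S M s (reflection S M t ?w)) =
      - tits_form S M t ?w + 2 * c * (tits_form S M s ?w + 2 * c * tits_form S M t ?w)"
    using assms by (simp_all add: tits_form_reflection tits_entry_def algebra_simps)
  then show ?case
    unfolding funpow.simps(2) o_apply Suc.IH[symmetric] by (simp add: rot_step_def)
qed simp

lemma reflection_pair_order:
  assumes "finite S" and "s \<in> S" and "t \<in> S" and "m \<ge> 3"
    and "tits_entry M s t = - cos (pi / m)" and "tits_entry M t s = - cos (pi / m)"
  shows "(reflection S M s \<circ> reflection S M t) ^^ m = id"
proof
  fix v
  define c where "c = cos (pi / m)"
  obtain p q where pq: "((reflection S M s \<circ> reflection S M t) ^^ m) v =
      (\<lambda>x. v x + p * unit_vec s x + q * unit_vec t x)"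
    using reflection_pair_span[where S = S and M = M and s = s and t = t and n = m and v = v] by blast
  have "(tits_form S M s (((reflection S M s \<circ> reflection S M t) ^^ m) v),
         tits_form S M t (((reflection S M s \<circ> reflection S M t) ^^ m) v)) =
        (tits_form S M s v, tits_form S M t v)"
    using tits_form_pair_funpow[OF assms(1-3,5,6), of m v] rot_step_order[OF assms(4)] by simp
  moreover have "tits_form S M u (((reflection S M s \<circ> reflection S M t) ^^ m) v) =
      tits_form S M u v + p * tits_entry M u s + q * tits_entry M u t" for u
    unfolding pq by (simp only: tits_form_add_unit_vec[OF assms(1,3)] tits_form_add_unit_vec[OF assms(1,2)])
  ultimately have "p * tits_entry M s s + q * tits_entry M s t = 0"
    and "p * tits_entry M t s + q * tits_entry M t t = 0"
    by simp_all
  then have pc: "p - c * q = 0" and qc: "q - c * p = 0"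
    using assms(5,6) by (simp_all add: c_def tits_entry_def[of M s s] tits_entry_def[of M t t])
  have "c\<^sup>2 < 1"
  proof -
    have "0 < pi / m" and "pi / m < pi" using assms(4) by (simp_all add: field_simps)
    then have "sin (pi / m) > 0" by (rule sin_gt_zero)
    then have "(sin (pi / m))\<^sup>2 > 0" by simp
    then show ?thesis unfolding c_def using sin_cos_squared_add[of "pi / m"] by linarith
  qed
  moreover have "p * (1 - c\<^sup>2) = 0" using pc qc by algebra
  ultimately have "p = 0" by simp
  moreover then have "q = 0" using qc by simp
  ultimately show "((reflection S M s \<circ> reflection S M t) ^^ m) v = id v" by (simp add: pq)
qed

lemma coxeter_rep_reflection:
  assumes "coxeter_matrix S M"
  shows "coxeter_rep S M (reflection S M)"
  unfolding coxeter_rep_def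
proof (intro conjI ballI allI impI)
  have fin: "finite S" using assms by (simp add: coxeter_matrix_def)
  show "reflection S M s \<circ> reflection S M s = id" if "s \<in> S" for s
    using fin that by (rule reflection_involution)
  fix s t k
  assume st: "s \<in> S" "t \<in> S" "s \<noteq> t" and k: "M s t = enat k"
  have entry: "tits_entry M s t = tits_coeff (enat k)" "tits_entry M t s = tits_coeff (enat k)"
    using st k tits_entry_sym[OF assms st(1,2)] by (simp_all add: tits_entry_def)
  have "k \<ge> 2" using coxeter_matrix_enat_ge_2[OF assms st k] .
  have "(reflection S M s \<circ> reflection S M t) ^^ k = id"
  proof (cases "even k")
    case True
    then obtain j where j: "k = 2 * j" by blast
    have "reflection S M s \<circ> reflection S M t = reflection S M t \<circ> reflection S M s"
      using True entry by (intro reflections_commute[OF fin st(1,2)]) (simp_all add: tits_coeff_def)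
    then have "(reflection S M s \<circ> reflection S M t) ^^ 2 = id"
      using reflection_involution[OF fin st(1)] reflection_involution[OF fin st(2)]
      by (simp add: numeral_2_eq_2) (metis comp_assoc comp_id)
    then show ?thesis by (simp add: j funpow_mult[symmetric])
  next
    case False
    then have "k \<ge> 3" using \<open>k \<ge> 2\<close> by presburger
    then show ?thesis
      using False entry by (intro reflection_pair_order[OF fin st(1,2)]) (simp_all add: tits_coeff_def)
  qed
  then show "alt_comp (reflection S M s) (reflection S M t) k = alt_comp (reflection S M t) (reflection S M s) k"
    using reflection_involution[OF fin st(1)] reflection_involution[OF fin st(2)] by (rule braid_of_order[rotated 2])
qed

definition signed_shear :: "real \<Rightarrow> real \<Rightarrow> real \<times> real \<Rightarrow> real \<times> real" where
  "signed_shear \<epsilon> k = (\<lambda>(x, z). (\<epsilon> * x, k * x + z))"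

lemma signed_shear_comp:
  "signed_shear \<epsilon> k \<circ> signed_shear \<epsilon>' k' = signed_shear (\<epsilon> * \<epsilon>') (k * \<epsilon>' + k')"
  by (auto simp: signed_shear_def fun_eq_iff algebra_simps)

lemma signed_shear_eq_iff: "signed_shear \<epsilon> k = signed_shear \<epsilon>' k' \<longleftrightarrow> \<epsilon> = \<epsilon>' \<and> k = k'"
  by (auto simp: signed_shear_def fun_eq_iff dest: spec[of _ 1] spec[of _ 0])

text \<open>The signed shears form the infinite dihedral group; those with \<open>\<epsilon> = -1\<close> are its
  reflections.\<close>
definition signed_shears :: "(real \<times> real \<Rightarrow> real \<times> real) set" where
  "signed_shears = {signed_shear \<epsilon> k | \<epsilon> k. \<epsilon> = 1 \<or> \<epsilon> = -1}"

lemma signed_shear_in_signed_shears: "\<epsilon> = 1 \<or> \<epsilon> = -1 \<Longrightarrow> signed_shear \<epsilon> k \<in> signed_shears"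
  unfolding signed_shears_def by blast

lemma id_in_signed_shears: "id \<in> signed_shears"
proof -
  have "id = signed_shear 1 0" by (auto simp: signed_shear_def)
  then show ?thesis using signed_shear_in_signed_shears[of 1 0] by simp
qed

lemma signed_shears_comp:
  assumes "F \<in> signed_shears" and "G \<in> signed_shears"
  shows "F \<circ> G \<in> signed_shears"
proof -
  obtain \<epsilon> k \<epsilon>' k' where "F = signed_shear \<epsilon> k" "\<epsilon> = 1 \<or> \<epsilon> = -1"
    and "G = signed_shear \<epsilon>' k'" "\<epsilon>' = 1 \<or> \<epsilon>' = -1"
    using assms unfolding signed_shears_def by auto
  then show ?thesis
    using signed_shear_in_signed_shears[of "\<epsilon> * \<epsilon>'" "k * \<epsilon>' + k'"] by (auto simp: signed_shear_comp)
qed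

lemma signed_shear_funpow: "signed_shear 1 t ^^ j = signed_shear 1 (j * t)"
  by (induction j) (auto simp: signed_shear_comp algebra_simps, simp add: signed_shear_def)

lemma alt_comp_shear_reflections:
  "alt_comp (signed_shear (-1) a) (signed_shear (-1) b) (2 * j) = signed_shear 1 (j * (b - a))"
  "alt_comp (signed_shear (-1) a) (signed_shear (-1) b) (2 * j + 1) = signed_shear (-1) (a + j * (a - b))"
  unfolding alt_comp_even alt_comp_odd
  by (simp_all add: signed_shear_comp signed_shear_funpow algebra_simps)

lemma shear_reflections_braid:
  assumes "n \<ge> 1"
    and "alt_comp (signed_shear (-1) a) (signed_shear (-1) b) n =
      alt_comp (signed_shear (-1) b) (signed_shear (-1) a) n"
  shows "a = b"
proof (cases "even n")
  case True
  then obtain j where n: "n = 2 * j" and "j \<ge> 1" using assms(1) by (auto elim: evenE)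
  then have "real j * (b - a) = real j * (a - b)"
    using assms(2) unfolding n alt_comp_shear_reflections signed_shear_eq_iff by simp
  then show ?thesis using \<open>j \<ge> 1\<close> by simp
next
  case False
  then obtain j where n: "n = 2 * j + 1" using oddE by blast
  then have "a + real j * (a - b) = b + real j * (b - a)"
    using assms(2) unfolding n alt_comp_shear_reflections signed_shear_eq_iff by simp
  then have "(2 * real j + 1) * (a - b) = 0" by (simp add: algebra_simps)
  then show ?thesis by (simp add: add_pos_nonneg)
qed

lemma signed_shear_odd_braid:
  assumes "\<epsilon> = 1 \<or> \<epsilon> = -1" and "odd n"
    and braid: "alt_comp (signed_shear (-1) a) (signed_shear \<epsilon> k) n =
      alt_comp (signed_shear \<epsilon> k) (signed_shear (-1) a) n"
  shows "\<epsilon> = -1" and "k = a"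
proof -
  show "\<epsilon> = -1"
  proof (rule ccontr)
    assume "\<epsilon> \<noteq> -1"
    with assms(1) have "\<epsilon> = 1" by simp
    have sign: "(*) e \<circ> fst = fst \<circ> signed_shear e l" for e l
      by (auto simp: signed_shear_def)
    have "surj (fst :: real \<times> real \<Rightarrow> real)" by (rule surjI[of _ "\<lambda>x. (x, 0)"]) simp
    then have "alt_comp ((*) (-1)) ((*) \<epsilon>) n = alt_comp ((*) \<epsilon>) ((*) (-1 :: real)) n"
      using sign sign braid by (rule braid_quotient)
    moreover have "(*) (1 :: real) = id" by (simp add: fun_eq_iff)
    ultimately have "alt_comp ((*) (-1)) id n = alt_comp id ((*) (-1 :: real)) n"
      using \<open>\<epsilon> = 1\<close> by simp
    moreover have "inj ((*) (-1 :: real))" by (simp add: inj_def)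
    ultimately have "(*) (-1 :: real) = id" using odd_braid_with_id assms(2) by blast
    then have "(-1 :: real) * 1 = id 1" by (rule fun_cong)
    then show False by simp
  qed
  then show "k = a"
    using shear_reflections_braid[of n a k] braid odd_pos[OF assms(2)] by simp
qed

lemma no_retraction_onto_even_pair:
  assumes cox: "coxeter_matrix S M" and S: "a \<in> S" "b \<in> S" "c \<in> S"
    and distinct: "a \<noteq> b" "a \<noteq> c" "b \<noteq> c"
    and ab: "M a b = enat m\<^sub>1" "odd m\<^sub>1" and ac: "M a c = enat m\<^sub>2" "even m\<^sub>2"
    and bc: "M b c = enat m\<^sub>3" "odd m\<^sub>3"
  shows "\<not> is_retraction (artin_group S M) (parabolic S M {a, c}) \<phi>"
proof
  assume ret: "is_retraction (artin_group S M) (parabolic S M {a, c}) \<phi>"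
  have fin: "finite S" using cox by (simp add: coxeter_matrix_def)
  have rep: "coxeter_rep S M (reflection S M)" using cox by (rule coxeter_rep_reflection)
  define h :: "real \<Rightarrow> _" where "h x = (\<lambda>w. x * unit_vec a w)" for x
  define y where "y = class_action (reflection S M) (\<phi> (artin_gen S M b))"
  have "inj h"
  proof (rule injI)
    fix x x' assume "h x = h x'"
    then have "h x a = h x' a" by simp
    then show "x = x'" by (simp add: h_def unit_vec_def)
  qed
  have "tits_entry M c a = 0"
    using ac distinct(2) tits_entry_sym[OF cox S(1,3)] by (simp add: tits_entry_def tits_coeff_def)
  then have refl_a: "reflection S M a \<circ> h = h \<circ> uminus" and refl_c: "reflection S M c \<circ> h = h \<circ> id"
    by (simp_all add: fun_eq_iff reflection_def h_def tits_form_scale tits_form_unit_vec[OF fin S(1)]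
        tits_entry_def)
  obtain F where F: "F \<in> {id, uminus}" and y: "y \<circ> h = h \<circ> F"
  proof -
    have "\<exists>F\<in>{id, uminus}. y \<circ> h = h \<circ> F"
      unfolding y_def using refl_a refl_c S
      by (intro retraction_semiconj[OF rep ret]) (auto simp: fun_eq_iff)
    then show ?thesis using that by blast
  qed
  have "alt_comp (reflection S M a) y m\<^sub>1 = alt_comp y (reflection S M a) m\<^sub>1"
    unfolding y_def using S ab distinct(1) by (intro retraction_braid[OF rep ret]) auto
  then have braid_a: "alt_comp uminus F m\<^sub>1 = alt_comp F uminus m\<^sub>1"
    by (rule braid_restrict[OF \<open>inj h\<close> refl_a y])
  have "M c b = enat m\<^sub>3" using coxeter_matrix_sym[OF cox S(2,3)] bc(1) by simp
  then have "alt_comp (reflection S M c) y m\<^sub>3 = alt_comp y (reflection S M c) m\<^sub>3"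
    unfolding y_def using S distinct(3) by (intro retraction_braid[OF rep ret]) auto
  then have braid_c: "alt_comp id F m\<^sub>3 = alt_comp F id m\<^sub>3"
    by (rule braid_restrict[OF \<open>inj h\<close> refl_c y])
  have uminus: "inj (uminus :: real \<Rightarrow> real)" "(uminus :: real \<Rightarrow> real) \<noteq> id"
    by (auto simp: inj_def fun_eq_iff intro: exI[of _ 1])
  from F show False
  proof (elim insertE emptyE)
    assume "F = id"
    then show False using odd_braid_with_id[OF uminus(1) ab(2)] braid_a uminus(2) by simp
  next
    assume "F = uminus"
    then show False using odd_braid_with_id[OF uminus(1) bc(2)] braid_c uminus(2) by simp
  qed
qed

lemma no_retraction_onto_free_pair:
  assumes cox: "coxeter_matrix S M" and S: "a \<in> S" "b \<in> S" "c \<in> S"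
    and distinct: "a \<noteq> b" "a \<noteq> c" "b \<noteq> c"
    and ab: "M a b = enat m\<^sub>1" "odd m\<^sub>1" and ac: "M a c = enat m\<^sub>2" and bc: "M b c = \<infinity>"
  shows "\<not> is_retraction (artin_group S M) (parabolic S M {b, c}) \<phi>"
proof
  assume ret: "is_retraction (artin_group S M) (parabolic S M {b, c}) \<phi>"
  have fin: "finite S" using cox by (simp add: coxeter_matrix_def)
  have rep: "coxeter_rep S M (reflection S M)" using cox by (rule coxeter_rep_reflection)
  define h :: "real \<times> real \<Rightarrow> _" where "h = (\<lambda>(x, z) w. (x + z) * unit_vec b w + z * unit_vec c w)"
  define y where "y = class_action (reflection S M) (\<phi> (artin_gen S M a))"
  have "inj h"
  proof (rule injI)
    fix p q assume eq: "h p = h q"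
    obtain x z x' z' where p: "p = (x, z)" and q: "q = (x', z')" by fastforce
    have "h p b = h q b" and "h p c = h q c" using eq by simp_all
    then have "x + z = x' + z'" and "z = z'" using distinct(3) by (simp_all add: p q h_def unit_vec_def)
    then show "p = q" by (simp add: p q)
  qed
  have "tits_entry M b c = -1" and "tits_entry M c b = -1"
    using bc distinct(3) tits_entry_sym[OF cox S(2,3)] by (simp_all add: tits_entry_def tits_coeff_def)
  then have form_b: "tits_form S M b (h (x, z)) = x" and form_c: "tits_form S M c (h (x, z)) = - x" for x z
    by (simp_all add: h_def tits_form_lincomb tits_form_unit_vec[OF fin S(2)] tits_form_unit_vec[OF fin S(3)]
        tits_entry_def[of M b b] tits_entry_def[of M c c])
  have refl_b: "reflection S M b \<circ> h = h \<circ> signed_shear (-1) 0"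
  proof
    fix p :: "real \<times> real"
    obtain x z where p: "p = (x, z)" by fastforce
    show "(reflection S M b \<circ> h) p = (h \<circ> signed_shear (-1) 0) p"
      unfolding p comp_apply reflection_def form_b
      by (simp add: h_def signed_shear_def unit_vec_def fun_eq_iff algebra_simps)
  qed
  have refl_c: "reflection S M c \<circ> h = h \<circ> signed_shear (-1) 2"
  proof
    fix p :: "real \<times> real"
    obtain x z where p: "p = (x, z)" by fastforce
    show "(reflection S M c \<circ> h) p = (h \<circ> signed_shear (-1) 2) p"
      unfolding p comp_apply reflection_def form_c
      using distinct(3) by (simp add: h_def signed_shear_def unit_vec_def fun_eq_iff algebra_simps)
  qed
  have bc_sub: "{b, c} \<subseteq> S" using S by simp
  obtain \<epsilon> k where \<epsilon>: "\<epsilon> = 1 \<or> \<epsilon> = -1" and y: "y \<circ> h = h \<circ> signed_shear \<epsilon> k"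
  proof -
    have gens: "\<exists>F\<in>signed_shears. reflection S M x \<circ> h = h \<circ> F" if "x \<in> {b, c}" for x
    proof -
      have T: "signed_shear (-1) l \<in> signed_shears" for l by (simp add: signed_shear_in_signed_shears)
      from that consider "x = b" | "x = c" by blast
      then show ?thesis
      proof cases
        case 1
        show ?thesis unfolding 1 by (intro bexI[where x = "signed_shear (-1) 0"] refl_b T)
      next
        case 2
        show ?thesis unfolding 2 by (intro bexI[where x = "signed_shear (-1) 2"] refl_c T)
      qed
    qed
    have "\<exists>F\<in>signed_shears. y \<circ> h = h \<circ> F"
      unfolding y_def
      by (rule retraction_semiconj[OF rep ret bc_sub S(1) id_in_signed_shears signed_shears_comp gens])
    then show ?thesis using that unfolding signed_shears_def by blast
  qed
  have "M b a = enat m\<^sub>1" using coxeter_matrix_sym[OF cox S(1,2)] ab(1) by simp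
  then have "alt_comp (reflection S M b) y m\<^sub>1 = alt_comp y (reflection S M b) m\<^sub>1"
    unfolding y_def using retraction_braid[OF rep ret bc_sub _ S(1) distinct(1)[symmetric]] by simp
  then have braid_b: "alt_comp (signed_shear (-1) 0) (signed_shear \<epsilon> k) m\<^sub>1 =
      alt_comp (signed_shear \<epsilon> k) (signed_shear (-1) 0) m\<^sub>1"
    by (rule braid_restrict[OF \<open>inj h\<close> refl_b y])
  then have "\<epsilon> = -1" and "k = 0"
    using signed_shear_odd_braid[OF \<epsilon> ab(2)] by simp_all
  have "M c a = enat m\<^sub>2" using coxeter_matrix_sym[OF cox S(1,3)] ac by simp
  then have "alt_comp (reflection S M c) y m\<^sub>2 = alt_comp y (reflection S M c) m\<^sub>2"
    unfolding y_def using retraction_braid[OF rep ret bc_sub _ S(1) distinct(2)[symmetric]] by simp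
  then have "alt_comp (signed_shear (-1) 2) (signed_shear (-1) 0) m\<^sub>2 =
      alt_comp (signed_shear (-1) 0) (signed_shear (-1) 2) m\<^sub>2"
    using braid_restrict[OF \<open>inj h\<close> refl_c y] \<open>\<epsilon> = -1\<close> \<open>k = 0\<close> by blast
  moreover have "m\<^sub>2 \<ge> 1"
    using coxeter_matrix_enat_ge_2[OF cox S(1,3) distinct(2) ac] by simp
  ultimately show False using shear_reflections_braid[of m\<^sub>2 2 0] by simp
qed

theorem lemma3p3:
  fixes S :: "'s set" and M :: "'s \<Rightarrow> 's \<Rightarrow> enat" and a b c :: 's
  assumes "coxeter_matrix S M"
    and "parabolic_retractable S M"
    and "a \<in> S" and "b \<in> S" and "c \<in> S"
    and "a \<noteq> b" and "a \<noteq> c" and "b \<noteq> c"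
    and "odd_entry (M a b)" and "even_entry (M a c)"
  shows "even_entry (M b c)"
proof (rule ccontr)
  assume not_even: "\<not> even_entry (M b c)"
  obtain m\<^sub>1 m\<^sub>2 where ab: "M a b = enat m\<^sub>1" "odd m\<^sub>1" and ac: "M a c = enat m\<^sub>2" "even m\<^sub>2"
    using assms(9,10) unfolding odd_entry_def even_entry_def by blast
  have retraction: "\<exists>\<phi>. is_retraction (artin_group S M) (parabolic S M {s, t}) \<phi>"
    if "s \<in> S" and "t \<in> S" for s t
    using assms(2) that unfolding parabolic_retractable_def by simp
  show False
  proof (cases "M b c")
    case (enat m\<^sub>3)
    with not_even have "odd m\<^sub>3" by (auto simp: even_entry_def)
    then show False
      using no_retraction_onto_even_pair[OF assms(1,3-8) ab ac enat] retraction[OF assms(3,5)] by blast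
  next
    case infinity
    then show False
      using no_retraction_onto_free_pair[OF assms(1,3-8) ab ac(1)] retraction[OF assms(4,5)] by blast
  qed
qed

end
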